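(* For each positive integer $n$ let $(\Theta_n(t),t\ge0)$ be Kingman's coalescent started from $n$ singletons, and for $1\le k\le n$ let $T_k=\inf\{t:|\Theta_n(t)|=k\}$, where $|\pi|$ is the number of blocks of $\pi$. For every $\epsilon>0$ there exists a constant $C>0$ such that, for every $n$, with probability at least $1-\epsilon$, $$\Big|T_k-\Big(\frac2k-\frac2n\Big)\Big|\le\frac{C}{n^{9/8}}$$ for all integers $k$ with $n^{3/4}\le k\le n$.
   Context: Kingman's coalescent $(\Theta_n(t),t\ge0)$ is the continuous-time time-homogeneous Markov chain on partitions of $\{1,\dots,n\}$ with $\Theta_n(0)=\{\{1\},\dots,\{n\}\}$, in which each pair of blocks merges into one at rate $1$ and no other transitions occur. *)

theory Defs
  imports "HOL-Probability.Probability"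
begin

text \<open>Partitions of {1..n} are represented as sets of blocks (nat set set).\<close>

definition singletons :: "nat \<Rightarrow> nat set set" where
  "singletons n = (\<lambda>i. {i}) ` {1..n}"

definition merges :: "nat set set \<Rightarrow> nat set set set" where
  "merges q = {insert (A \<union> B) (q - {A, B}) | A B. A \<in> q \<and> B \<in> q \<and> A \<noteq> B}"

text \<open>Jump-chain transition probability of Kingman's coalescent: each of the
  (|q| choose 2) pairs of blocks merges with equal probability.\<close>
definition merge_prob :: "nat set set \<Rightarrow> nat set set \<Rightarrow> real" where
  "merge_prob q q' = (if q' \<in> merges q then 1 / real (card q choose 2) else 0)"

text \<open>Jump-hold description of Kingman's coalescent started from n singletons:
  X m is the state after m merges (jump chain), S m the holding time in state X m,
  which is exponential with rate (|X m| choose 2) (each pair merges at rate 1),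
  independent of everything else given the jump chain.\<close>
definition kingman_jump_hold ::
  "'a measure \<Rightarrow> nat \<Rightarrow> (nat \<Rightarrow> 'a \<Rightarrow> nat set set) \<Rightarrow> (nat \<Rightarrow> 'a \<Rightarrow> real) \<Rightarrow> bool" where
  "kingman_jump_hold M n X S \<longleftrightarrow>
     prob_space M \<and>
     (\<forall>m. X m \<in> M \<rightarrow>\<^sub>M count_space UNIV) \<and>
     (\<forall>m. S m \<in> borel_measurable M) \<and>
     (\<forall>\<omega>\<in>space M. X 0 \<omega> = singletons n) \<and>
     (\<forall>p s. p 0 = singletons n \<longrightarrow>
        measure M {\<omega> \<in> space M. \<forall>m<n-1. X (Suc m) \<omega> = p (Suc m) \<and> S m \<omega> > s m}
        = (\<Prod>m<n-1. merge_prob (p m) (p (Suc m))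
              * exp (- real (card (p m) choose 2) * max 0 (s m))))"

text \<open>The continuous-time process: Theta(t) = X (number of jumps by time t),
  the j-th jump (j < n-1) happening at time S 0 + ... + S j.\<close>
definition kingman_proc ::
  "nat \<Rightarrow> (nat \<Rightarrow> 'a \<Rightarrow> nat set set) \<Rightarrow> (nat \<Rightarrow> 'a \<Rightarrow> real) \<Rightarrow> real \<Rightarrow> 'a \<Rightarrow> nat set set" where
  "kingman_proc n X S t \<omega> = X (card {j. j < n - 1 \<and> (\<Sum>i\<le>j. S i \<omega>) \<le> t}) \<omega>"

definition hit_time ::
  "nat \<Rightarrow> (nat \<Rightarrow> 'a \<Rightarrow> nat set set) \<Rightarrow> (nat \<Rightarrow> 'a \<Rightarrow> real) \<Rightarrow> nat \<Rightarrow> 'a \<Rightarrow> real" where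
  "hit_time n X S k \<omega> = Inf {t. 0 \<le> t \<and> card (kingman_proc n X S t \<omega>) = k}"

end

theory Submission
  imports Defs
begin

text \<open>After \<open>m\<close> merges the jump chain has \<open>n - m\<close> blocks, and the product form of the
  jump-hold law makes the holding times independent exponentials of rates \<open>(n - m) choose 2\<close>.
  Hence \<open>T\<^sub>k\<close> is almost surely the sum of the first \<open>n - k\<close> holding times; its mean
  telescopes to \<open>2/k - 2/n\<close> and its variance is at most \<open>4/k\<^sup>3\<close>. Kolmogorov's maximal
  inequality controls all centred partial sums at once: one of the deviations for \<open>k \<ge> K\<close>
  reaches \<open>\<lambda>\<close> with probability at most \<open>4 / (\<lambda>\<^sup>2 K\<^sup>3)\<close>, which is \<open>4 / C\<^sup>2 = \<epsilon>\<close>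
  for \<open>K = \<lceil>n powr (3/4)\<rceil>\<close> and \<open>\<lambda> = C / n powr (9/8)\<close>.\<close>

section \<open>Independence from a factorised survival function\<close>

lemma sets_PiM_borel_greaterThan:
  assumes "finite I"
  shows "sets (\<Pi>\<^sub>M i\<in>I. (borel :: real measure)) =
    sigma_sets (\<Pi>\<^sub>E i\<in>I. UNIV) {\<Pi>\<^sub>E i\<in>I. A i | A. A \<in> I \<rightarrow> range greaterThan}"
proof -
  have cover: "\<exists>S\<subseteq>range greaterThan. countable S \<and> (UNIV :: real set) = \<Union>S"
  proof (intro exI conjI)
    show "(UNIV :: real set) = \<Union>(range (\<lambda>k::nat. {- real k<..}))"
      by (auto simp: minus_less_iff intro: reals_Archimedean2)
  qed auto
  have "sets (\<Pi>\<^sub>M i\<in>I. (borel :: real measure)) =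
      sets (\<Pi>\<^sub>M i\<in>I. sigma UNIV (range greaterThan :: real set set))"
    by (simp only: borel_Ioi)
  also have "\<dots> = sets (sigma (\<Pi>\<^sub>E i\<in>I. UNIV)
      {{f\<in>\<Pi>\<^sub>E i\<in>I. UNIV. \<forall>i\<in>j. f i \<in> A i} | A j. j \<in> {I} \<and> A \<in> Pi j (\<lambda>_. range greaterThan)})"
    using assms cover by (intro sets_PiM_sigma) auto
  also have "{{f\<in>\<Pi>\<^sub>E i\<in>I. UNIV. \<forall>i\<in>j. f i \<in> A i} | A j. j \<in> {I} \<and> A \<in> Pi j (\<lambda>_. range greaterThan)}
      = {\<Pi>\<^sub>E i\<in>I. A i | A. A \<in> I \<rightarrow> range greaterThan}"
    by (auto simp: PiE_def Pi_def)
  also have "sets (sigma (\<Pi>\<^sub>E i\<in>I. UNIV) {\<Pi>\<^sub>E i\<in>I. A i | A. A \<in> I \<rightarrow> range greaterThan})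
      = sigma_sets (\<Pi>\<^sub>E i\<in>I. UNIV) {\<Pi>\<^sub>E i\<in>I. A i | A. A \<in> I \<rightarrow> range greaterThan}"
    by (rule sets_measure_of) auto
  finally show ?thesis .
qed

lemma Int_stable_PiE_greaterThan:
  fixes I :: "'i set"
  shows "Int_stable {\<Pi>\<^sub>E i\<in>I. A i | A. A \<in> I \<rightarrow> range (greaterThan :: real \<Rightarrow> real set)}"
    (is "Int_stable ?G")
proof (rule Int_stableI)
  fix a b assume "a \<in> ?G" "b \<in> ?G"
  then obtain A B where ab: "a = (\<Pi>\<^sub>E i\<in>I. A i)" "b = (\<Pi>\<^sub>E i\<in>I. B i)"
    and A: "A \<in> I \<rightarrow> range greaterThan" and B: "B \<in> I \<rightarrow> range greaterThan" by blast
  have "A i \<inter> B i \<in> range greaterThan" if "i \<in> I" for i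
  proof -
    obtain x y where "A i = {x<..}" "B i = {y<..}" using A B \<open>i \<in> I\<close> by blast
    then show ?thesis by (auto intro: range_eqI[of _ _ "max x y"])
  qed
  then show "a \<inter> b \<in> ?G"
    unfolding ab by (intro CollectI exI[of _ "\<lambda>i. A i \<inter> B i"]) (auto simp: PiE_Int)
qed

lemma UN_PiE_greaterThan_minus_nat:
  assumes "finite I"
  shows "(\<Union>k::nat. \<Pi>\<^sub>E i\<in>I. {- real k<..}) = (\<Pi>\<^sub>E i\<in>I. UNIV :: real set)"
proof (intro equalityI subsetI)
  fix f assume f: "f \<in> (\<Pi>\<^sub>E i\<in>I. UNIV :: real set)"
  obtain k :: nat where k: "(\<Sum>i\<in>I. \<bar>f i\<bar>) < real k" using reals_Archimedean2 by blast
  have "\<bar>f i\<bar> \<le> (\<Sum>i\<in>I. \<bar>f i\<bar>)" if "i \<in> I" for i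
    using assms that by (intro member_le_sum) auto
  then have "f \<in> (\<Pi>\<^sub>E i\<in>I. {- real k<..})" using f k by (force simp: PiE_def)
  then show "f \<in> (\<Union>k::nat. \<Pi>\<^sub>E i\<in>I. {- real k<..})" by blast
qed auto

text \<open>The joint law and the product of the marginals agree on the boxes
  \<open>\<Pi>\<^sub>E i\<in>I. {s i<..}\<close>, an intersection-stable generator of the product \<open>\<sigma>\<close>-algebra.\<close>

lemma (in prob_space) indep_vars_survivalI:
  fixes Y :: "'i \<Rightarrow> 'a \<Rightarrow> real"
  assumes I: "finite I" and Y[measurable]: "\<And>i. Y i \<in> borel_measurable M"
    and survival: "\<And>s. prob {\<omega>\<in>space M. \<forall>i\<in>I. s i < Y i \<omega>} = (\<Prod>i\<in>I. prob {\<omega>\<in>space M. s i < Y i \<omega>})"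
  shows "indep_vars (\<lambda>_. borel) Y I"
proof (cases "I = {}")
  case True
  then show ?thesis by (simp add: indep_vars_def indep_sets_def)
next
  case False
  let ?\<Omega> = "\<Pi>\<^sub>E i\<in>I. (UNIV :: real set)"
  let ?Gen = "{\<Pi>\<^sub>E i\<in>I. A i | A. A \<in> I \<rightarrow> range (greaterThan :: real \<Rightarrow> real set)}"
  let ?D = "distr M (\<Pi>\<^sub>M i\<in>I. borel) (\<lambda>\<omega>. \<lambda>i\<in>I. Y i \<omega>)"
  interpret D: prob_space ?D by (rule prob_space_distr) simp
  interpret product_sigma_finite "\<lambda>i. distr M borel (Y i)"
    by (simp add: product_sigma_finite_def prob_space_imp_sigma_finite prob_space_distr)
  define box where "box k = (\<Pi>\<^sub>E i\<in>I. {- real k<..})" for k :: nat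
  have "?D = (\<Pi>\<^sub>M i\<in>I. distr M borel (Y i))"
  proof (rule measure_eqI_generator_eq[where E="?Gen" and \<Omega>="?\<Omega>" and A=box])
    show "Int_stable ?Gen" by (rule Int_stable_PiE_greaterThan)
    show "?Gen \<subseteq> Pow ?\<Omega>" by auto
    show "sets ?D = sigma_sets ?\<Omega> ?Gen"
      using sets_PiM_borel_greaterThan[OF I] by simp
    show "sets (\<Pi>\<^sub>M i\<in>I. distr M borel (Y i)) = sigma_sets ?\<Omega> ?Gen"
      using sets_PiM_borel_greaterThan[OF I] by (simp cong: sets_PiM_cong)
    show "range box \<subseteq> ?Gen" unfolding box_def by auto
    show "(\<Union>k. box k) = ?\<Omega>"
      unfolding box_def by (rule UN_PiE_greaterThan_minus_nat[OF I])
    show "emeasure ?D (box k) \<noteq> \<infinity>" for k by simp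
  next
    fix Z assume "Z \<in> ?Gen"
    then obtain A where Z: "Z = (\<Pi>\<^sub>E i\<in>I. A i)" and "A \<in> I \<rightarrow> range greaterThan" by blast
    then have "\<forall>i\<in>I. \<exists>x. A i = {x<..}" by blast
    then obtain s where s: "\<And>i. i \<in> I \<Longrightarrow> A i = {s i<..}" by metis
    have "Z \<in> sets (\<Pi>\<^sub>M i\<in>I. borel)"
      unfolding Z using s I by (intro sets_PiM_I_finite) auto
    then have "emeasure ?D Z = emeasure M ((\<lambda>\<omega>. \<lambda>i\<in>I. Y i \<omega>) -` Z \<inter> space M)"
      by (intro emeasure_distr) simp_all
    also have "(\<lambda>\<omega>. \<lambda>i\<in>I. Y i \<omega>) -` Z \<inter> space M = {\<omega>\<in>space M. \<forall>i\<in>I. s i < Y i \<omega>}"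
      unfolding Z using s by (force simp: PiE_def Pi_def)
    also have "emeasure M {\<omega>\<in>space M. \<forall>i\<in>I. s i < Y i \<omega>} = (\<Prod>i\<in>I. ennreal (prob {\<omega>\<in>space M. s i < Y i \<omega>}))"
      by (simp add: emeasure_eq_measure survival prod_ennreal)
    also have "\<dots> = (\<Prod>i\<in>I. emeasure (distr M borel (Y i)) (A i))"
      using s by (intro prod.cong refl) (simp add: emeasure_distr emeasure_eq_measure vimage_def Int_def conj_commute)
    also have "\<dots> = emeasure (\<Pi>\<^sub>M i\<in>I. distr M borel (Y i)) Z"
      using s I unfolding Z by (subst emeasure_PiM) auto
    finally show "emeasure ?D Z = emeasure (\<Pi>\<^sub>M i\<in>I. distr M borel (Y i)) Z" .
  qed
  then show ?thesis
    using indep_vars_iff_distr_eq_PiM[OF False, where M'="\<lambda>_. borel" and X=Y] Y by simp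
qed

section \<open>Second moments of sums of independent variables\<close>

lemma (in prob_space) exponential_distributed_centered_moments:
  assumes l: "0 < l" and X: "distributed M lborel X (exponential_density l)"
  shows "integrable M (\<lambda>\<omega>. (X \<omega> - 1 / l)\<^sup>2)"
    and "expectation (\<lambda>\<omega>. X \<omega> - 1 / l) = 0"
    and "expectation (\<lambda>\<omega>. (X \<omega> - 1 / l)\<^sup>2) = 1 / l\<^sup>2"
proof -
  have int1: "integrable M X" and int2: "integrable M (\<lambda>\<omega>. (X \<omega>)\<^sup>2)"
    using erlang_ith_moment_integrable[OF l X, of 1] erlang_ith_moment_integrable[OF l X, of 2]
    by auto
  have mean: "expectation X = 1 / l"
    by (rule exponential_distributed_expectation[OF l X])
  have "(\<lambda>\<omega>. (X \<omega> - 1 / l)\<^sup>2) = (\<lambda>\<omega>. (X \<omega>)\<^sup>2 - 2 / l * X \<omega> + (1 / l)\<^sup>2)"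
    by (simp add: power2_diff algebra_simps)
  then show "integrable M (\<lambda>\<omega>. (X \<omega> - 1 / l)\<^sup>2)"
    using int1 int2 by simp
  show "expectation (\<lambda>\<omega>. X \<omega> - 1 / l) = 0"
    using int1 mean by (simp add: prob_space)
  show "expectation (\<lambda>\<omega>. (X \<omega> - 1 / l)\<^sup>2) = 1 / l\<^sup>2"
    using exponential_distributed_variance[OF l X] by (simp add: mean)
qed

lemma (in prob_space) integrable_mult_of_square_integrable:
  fixes f g :: "'a \<Rightarrow> real"
  assumes [measurable]: "f \<in> borel_measurable M" "g \<in> borel_measurable M"
    and "integrable M (\<lambda>x. (f x)\<^sup>2)" "integrable M (\<lambda>x. (g x)\<^sup>2)"
  shows "integrable M (\<lambda>x. f x * g x)"
proof (rule Bochner_Integration.integrable_bound[where f="\<lambda>x. (f x)\<^sup>2 + (g x)\<^sup>2"])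
  have "\<bar>a * b\<bar> \<le> a\<^sup>2 + b\<^sup>2" for a b :: real
  proof -
    have "2 * \<bar>a * b\<bar> \<le> a\<^sup>2 + b\<^sup>2"
      using sum_squares_bound[of "\<bar>a\<bar>" "\<bar>b\<bar>"] by (simp add: abs_mult mult.assoc)
    then show ?thesis using abs_ge_zero[of "a * b"] by linarith
  qed
  then show "AE x in M. norm (f x * g x) \<le> norm ((f x)\<^sup>2 + (g x)\<^sup>2)" by simp
qed (use assms in simp_all)

lemma (in prob_space) integrable_square_sum:
  fixes Y :: "nat \<Rightarrow> 'a \<Rightarrow> real"
  assumes [measurable]: "\<And>i. Y i \<in> borel_measurable M"
    and "\<And>i. i \<in> I \<Longrightarrow> integrable M (\<lambda>\<omega>. (Y i \<omega>)\<^sup>2)"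
  shows "integrable M (\<lambda>\<omega>. (\<Sum>i\<in>I. Y i \<omega>)\<^sup>2)"
  unfolding power2_eq_square sum_product
  using assms by (intro Bochner_Integration.integrable_sum integrable_mult_of_square_integrable) auto

lemma (in prob_space) expectation_square_sum_indep:
  fixes Y :: "nat \<Rightarrow> 'a \<Rightarrow> real"
  assumes ind: "indep_vars (\<lambda>_. borel) Y I" and I: "finite I"
    and meas[measurable]: "\<And>i. Y i \<in> borel_measurable M"
    and sq: "\<And>i. i \<in> I \<Longrightarrow> integrable M (\<lambda>\<omega>. (Y i \<omega>)\<^sup>2)"
    and mean: "\<And>i. i \<in> I \<Longrightarrow> expectation (Y i) = 0"
  shows "expectation (\<lambda>\<omega>. (\<Sum>i\<in>I. Y i \<omega>)\<^sup>2) = (\<Sum>i\<in>I. expectation (\<lambda>\<omega>. (Y i \<omega>)\<^sup>2))"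
proof -
  have prod: "integrable M (\<lambda>\<omega>. Y a \<omega> * Y b \<omega>)" if "a \<in> I" "b \<in> I" for a b
    using that sq by (intro integrable_mult_of_square_integrable) auto
  have cross: "expectation (\<lambda>\<omega>. Y a \<omega> * Y b \<omega>) = (if a = b then expectation (\<lambda>\<omega>. (Y a \<omega>)\<^sup>2) else 0)"
    if ab: "a \<in> I" "b \<in> I" for a b
  proof (cases "a = b")
    case False
    have "indep_vars (\<lambda>_. borel) Y {a, b}"
      using ab by (intro indep_vars_subset[OF ind]) auto
    then have "expectation (\<lambda>\<omega>. \<Prod>i\<in>{a, b}. Y i \<omega>) = (\<Prod>i\<in>{a, b}. expectation (Y i))"
      using ab sq by (intro indep_vars_lebesgue_integral) (auto intro: square_integrable_imp_integrable)
    then show ?thesis using False mean ab by simp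
  qed (simp add: power2_eq_square)
  have "expectation (\<lambda>\<omega>. (\<Sum>i\<in>I. Y i \<omega>)\<^sup>2) = (\<Sum>a\<in>I. \<Sum>b\<in>I. expectation (\<lambda>\<omega>. Y a \<omega> * Y b \<omega>))"
    unfolding power2_eq_square sum_product
    using prod by (simp add: Bochner_Integration.integrable_sum)
  also have "\<dots> = (\<Sum>i\<in>I. expectation (\<lambda>\<omega>. (Y i \<omega>)\<^sup>2))"
    using I by (simp add: cross if_distrib cong: sum.cong)
  finally show ?thesis .
qed

section \<open>Kolmogorov's maximal inequality\<close>

lemma measurable_component_PiM_borel[measurable]:
  "(\<lambda>f. f i) \<in> borel_measurable (\<Pi>\<^sub>M i\<in>I. (borel :: real measure))"
proof (cases "i \<in> I")
  case False
  have "(\<lambda>f. undefined :: real) \<in> borel_measurable (\<Pi>\<^sub>M i\<in>I. (borel :: real measure))" by simp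
  then show ?thesis
    by (rule measurable_cong[THEN iffD1, rotated]) (use False in \<open>auto simp: space_PiM PiE_def extensional_def\<close>)
qed (rule measurable_component_singleton)

context prob_space
begin

definition first_exceedance :: "real \<Rightarrow> (nat \<Rightarrow> 'a \<Rightarrow> real) \<Rightarrow> nat \<Rightarrow> 'a set" where
  "first_exceedance lam Z j = {\<omega>\<in>space M. lam \<le> \<bar>Z j \<omega>\<bar> \<and> (\<forall>k\<in>{..<j}. \<bar>Z k \<omega>\<bar> < lam)}"

lemma sets_first_exceedance[measurable]:
  assumes [measurable]: "\<And>j. Z j \<in> borel_measurable M"
  shows "first_exceedance lam Z j \<in> sets M"
  unfolding first_exceedance_def by measurable

lemma disjoint_family_first_exceedance: "disjoint_family (first_exceedance lam Z)"
  unfolding disjoint_family_on_def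
proof (intro ballI impI)
  fix j j' :: nat assume "j \<noteq> j'"
  then consider "j < j'" | "j' < j" by linarith
  then show "first_exceedance lam Z j \<inter> first_exceedance lam Z j' = {}"
    by cases (auto simp: first_exceedance_def dest: bspec[where x = j] bspec[where x = j'])
qed

lemma UN_first_exceedance:
  "(\<Union>j\<le>J. first_exceedance lam Z j) = {\<omega>\<in>space M. \<exists>j\<le>J. lam \<le> \<bar>Z j \<omega>\<bar>}"
proof (intro equalityI subsetI)
  fix \<omega> assume "\<omega> \<in> {\<omega>\<in>space M. \<exists>j\<le>J. lam \<le> \<bar>Z j \<omega>\<bar>}"
  then obtain j where "\<omega> \<in> space M" "j \<le> J" "lam \<le> \<bar>Z j \<omega>\<bar>" "\<forall>k<j. \<not> lam \<le> \<bar>Z k \<omega>\<bar>"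
    using exists_least_iff[of "\<lambda>j. j \<le> J \<and> lam \<le> \<bar>Z j \<omega>\<bar>"] by (auto dest: order.strict_implies_order)
  then show "\<omega> \<in> (\<Union>j\<le>J. first_exceedance lam Z j)"
    unfolding first_exceedance_def by force
qed (auto simp: first_exceedance_def)

end

lemma (in prob_space) indep_prefix_orthogonal:
  fixes Y :: "nat \<Rightarrow> 'a \<Rightarrow> real" and F :: "(nat \<Rightarrow> real) \<Rightarrow> real"
  assumes ind: "indep_vars (\<lambda>_. borel) Y {..<J}" and [measurable]: "\<And>i. Y i \<in> borel_measurable M"
    and int: "\<And>i. i < J \<Longrightarrow> integrable M (Y i)" and mean: "\<And>i. i < J \<Longrightarrow> expectation (Y i) = 0"
    and F: "F \<in> borel_measurable (\<Pi>\<^sub>M i\<in>{..<j}. borel)"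
    and intF: "integrable M (\<lambda>\<omega>. F (\<lambda>i\<in>{..<j}. Y i \<omega>))" and j: "j \<le> J"
  shows "integrable M (\<lambda>\<omega>. F (\<lambda>i\<in>{..<j}. Y i \<omega>) * (\<Sum>i\<in>{j..<J}. Y i \<omega>))"
    and "expectation (\<lambda>\<omega>. F (\<lambda>i\<in>{..<j}. Y i \<omega>) * (\<Sum>i\<in>{j..<J}. Y i \<omega>)) = 0"
proof -
  define U where "U = F \<circ> (\<lambda>\<omega>. \<lambda>i\<in>{..<j}. Y i \<omega>)"
  define V where "V = (\<lambda>f. \<Sum>i\<in>{j..<J}. f i) \<circ> (\<lambda>\<omega>. \<lambda>i\<in>{j..<J}. Y i \<omega>)"
  have V: "V = (\<lambda>\<omega>. \<Sum>i\<in>{j..<J}. Y i \<omega>)" unfolding V_def by (simp add: fun_eq_iff)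
  have "(\<lambda>f. \<Sum>i\<in>{j..<J}. f i) \<in> borel_measurable (\<Pi>\<^sub>M i\<in>{j..<J}. (borel :: real measure))"
    by measurable
  then have indUV: "indep_var borel U borel V"
    unfolding U_def V_def using j
    by (intro indep_var_compose[OF indep_var_restrict[OF ind] F]) auto
  have intU: "integrable M U" using intF by (simp add: U_def comp_def)
  have intV: "integrable M V" unfolding V using int j by auto
  have "expectation V = 0" unfolding V using int mean j by (simp add: Bochner_Integration.integral_sum)
  then show "integrable M (\<lambda>\<omega>. F (\<lambda>i\<in>{..<j}. Y i \<omega>) * (\<Sum>i\<in>{j..<J}. Y i \<omega>))"
    and "expectation (\<lambda>\<omega>. F (\<lambda>i\<in>{..<j}. Y i \<omega>) * (\<Sum>i\<in>{j..<J}. Y i \<omega>)) = 0"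
    using indep_var_integrable[OF indUV intU intV] indep_var_lebesgue_integral[OF indUV intU intV]
    by (simp_all add: U_def V)
qed

lemma (in prob_space) first_exceedance_cross_term:
  fixes Y :: "nat \<Rightarrow> 'a \<Rightarrow> real"
  defines "Z \<equiv> \<lambda>j \<omega>. \<Sum>i<j. Y i \<omega>"
  assumes ind: "indep_vars (\<lambda>_. borel) Y {..<J}" and Y_meas[measurable]: "\<And>i. Y i \<in> borel_measurable M"
    and int: "\<And>i. i < J \<Longrightarrow> integrable M (Y i)" and mean: "\<And>i. i < J \<Longrightarrow> expectation (Y i) = 0"
    and j: "j \<le> J"
  shows "integrable M (\<lambda>\<omega>. indicator (first_exceedance lam Z j) \<omega> * Z j \<omega> * (\<Sum>i\<in>{j..<J}. Y i \<omega>))"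
    and "expectation (\<lambda>\<omega>. indicator (first_exceedance lam Z j) \<omega> * Z j \<omega> * (\<Sum>i\<in>{j..<J}. Y i \<omega>)) = 0"
proof -
  let ?A = "first_exceedance lam Z j"
  have [measurable]: "Z k \<in> borel_measurable M" for k unfolding Z_def by measurable
  define F where "F f = (if lam \<le> \<bar>\<Sum>i<j. f i\<bar> \<and> (\<forall>k<j. \<bar>\<Sum>i<k. f i\<bar> < lam) then \<Sum>i<j. f i else 0)"
    for f :: "nat \<Rightarrow> real"
  have F_meas: "F \<in> borel_measurable (\<Pi>\<^sub>M i\<in>{..<j}. borel)"
    unfolding F_def by measurable
  have F_eq: "F (\<lambda>i\<in>{..<j}. Y i \<omega>) = indicator ?A \<omega> * Z j \<omega>" if "\<omega> \<in> space M" for \<omega>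
    using that unfolding F_def first_exceedance_def Z_def by (auto simp: indicator_def)
  have "integrable M (Z j)" using j int unfolding Z_def by auto
  then have "integrable M (\<lambda>\<omega>. indicator ?A \<omega> * Z j \<omega>)"
    using integrable_real_mult_indicator[of ?A M "Z j"] by (simp add: mult.commute)
  moreover have "integrable M (\<lambda>\<omega>. F (\<lambda>i\<in>{..<j}. Y i \<omega>)) \<longleftrightarrow> integrable M (\<lambda>\<omega>. indicator ?A \<omega> * Z j \<omega>)"
    by (intro Bochner_Integration.integrable_cong) (simp_all add: F_eq)
  ultimately have "integrable M (\<lambda>\<omega>. F (\<lambda>i\<in>{..<j}. Y i \<omega>))" by simp
  note orth = indep_prefix_orthogonal[OF ind Y_meas int mean F_meas this j]
  have "integrable M (\<lambda>\<omega>. indicator ?A \<omega> * Z j \<omega> * (\<Sum>i\<in>{j..<J}. Y i \<omega>))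
      \<longleftrightarrow> integrable M (\<lambda>\<omega>. F (\<lambda>i\<in>{..<j}. Y i \<omega>) * (\<Sum>i\<in>{j..<J}. Y i \<omega>))"
    by (intro Bochner_Integration.integrable_cong) (simp_all add: F_eq)
  then show "integrable M (\<lambda>\<omega>. indicator ?A \<omega> * Z j \<omega> * (\<Sum>i\<in>{j..<J}. Y i \<omega>))"
    using orth(1) by simp
  have "expectation (\<lambda>\<omega>. indicator ?A \<omega> * Z j \<omega> * (\<Sum>i\<in>{j..<J}. Y i \<omega>))
      = expectation (\<lambda>\<omega>. F (\<lambda>i\<in>{..<j}. Y i \<omega>) * (\<Sum>i\<in>{j..<J}. Y i \<omega>))"
    by (intro Bochner_Integration.integral_cong) (simp_all add: F_eq)
  then show "expectation (\<lambda>\<omega>. indicator ?A \<omega> * Z j \<omega> * (\<Sum>i\<in>{j..<J}. Y i \<omega>)) = 0"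
    using orth(2) by simp
qed

text \<open>The increment after the first exceedance is orthogonal to everything observed up to it,
  so on that event the square of the total sum is at least \<open>lam\<^sup>2\<close> on average.\<close>

lemma (in prob_space) first_exceedance_bound:
  fixes Y :: "nat \<Rightarrow> 'a \<Rightarrow> real"
  defines "Z \<equiv> \<lambda>j \<omega>. \<Sum>i<j. Y i \<omega>"
  assumes ind: "indep_vars (\<lambda>_. borel) Y {..<J}" and Y_meas[measurable]: "\<And>i. Y i \<in> borel_measurable M"
    and sq: "\<And>i. i < J \<Longrightarrow> integrable M (\<lambda>\<omega>. (Y i \<omega>)\<^sup>2)"
    and mean: "\<And>i. i < J \<Longrightarrow> expectation (Y i) = 0"
    and lam: "0 \<le> lam" and j: "j \<le> J"
  shows "lam\<^sup>2 * prob (first_exceedance lam Z j)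
    \<le> expectation (\<lambda>\<omega>. indicator (first_exceedance lam Z j) \<omega> * (Z J \<omega>)\<^sup>2)"
proof -
  let ?A = "first_exceedance lam Z j"
  have [measurable]: "Z k \<in> borel_measurable M" for k unfolding Z_def by measurable
  have A_sets: "?A \<in> sets M" by measurable
  have "integrable M (Y i)" if "i < J" for i
    by (rule square_integrable_imp_integrable[OF _ sq[OF that]]) simp
  note cross = first_exceedance_cross_term[OF ind Y_meas this mean j, of lam]
  define W where "W \<omega> = indicator ?A \<omega> * Z j \<omega> * (\<Sum>i\<in>{j..<J}. Y i \<omega>)" for \<omega>
  have intW: "integrable M W" and EW: "expectation W = 0"
    using cross unfolding W_def Z_def by simp_all
  have split: "Z J \<omega> = Z j \<omega> + (\<Sum>i\<in>{j..<J}. Y i \<omega>)" for \<omega>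
    unfolding Z_def lessThan_atLeast0 using sum.atLeastLessThan_concat[OF le0 j, of "\<lambda>i. Y i \<omega>"] by simp
  have pointwise: "lam\<^sup>2 * indicator ?A \<omega> + 2 * W \<omega> \<le> indicator ?A \<omega> * (Z J \<omega>)\<^sup>2" for \<omega>
  proof (cases "\<omega> \<in> ?A")
    case True
    then have "lam \<le> \<bar>Z j \<omega>\<bar>" unfolding first_exceedance_def by blast
    then have "lam\<^sup>2 \<le> (Z j \<omega>)\<^sup>2" using lam power_mono[of lam "\<bar>Z j \<omega>\<bar>" 2] by simp
    then show ?thesis
      using True unfolding W_def split by (simp add: power2_sum add_increasing2)
  qed (simp add: W_def)
  have intZ: "integrable M (\<lambda>\<omega>. (Z J \<omega>)\<^sup>2)"
    unfolding Z_def using sq by (intro integrable_square_sum) auto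
  have intI: "integrable M (\<lambda>\<omega>. lam\<^sup>2 * indicator ?A \<omega>)"
    using A_sets by (intro integrable_mult_right integrable_real_indicator) (auto simp: less_top[symmetric])
  have "lam\<^sup>2 * prob ?A = expectation (\<lambda>\<omega>. lam\<^sup>2 * indicator ?A \<omega> + 2 * W \<omega>)"
    using intW EW intI A_sets by (simp add: Bochner_Integration.integral_add)
  also have "\<dots> \<le> expectation (\<lambda>\<omega>. indicator ?A \<omega> * (Z J \<omega>)\<^sup>2)"
    using intW intZ intI pointwise integrable_real_mult_indicator[OF A_sets intZ]
    by (intro integral_mono) (auto simp: mult.commute)
  finally show ?thesis .
qed

theorem (in prob_space) kolmogorov_inequality:
  fixes Y :: "nat \<Rightarrow> 'a \<Rightarrow> real"
  assumes ind: "indep_vars (\<lambda>_. borel) Y {..<J}" and [measurable]: "\<And>i. Y i \<in> borel_measurable M"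
    and sq: "\<And>i. i < J \<Longrightarrow> integrable M (\<lambda>\<omega>. (Y i \<omega>)\<^sup>2)"
    and mean: "\<And>i. i < J \<Longrightarrow> expectation (Y i) = 0"
    and lam: "0 \<le> lam"
  shows "lam\<^sup>2 * prob {\<omega>\<in>space M. \<exists>j\<le>J. lam \<le> \<bar>\<Sum>i<j. Y i \<omega>\<bar>}
    \<le> (\<Sum>i<J. expectation (\<lambda>\<omega>. (Y i \<omega>)\<^sup>2))"
proof -
  define Z where "Z j \<omega> = (\<Sum>i<j. Y i \<omega>)" for j \<omega>
  let ?A = "first_exceedance lam Z" and ?B = "\<Union>j\<le>J. first_exceedance lam Z j"
  have Z_meas[measurable]: "Z j \<in> borel_measurable M" for j unfolding Z_def by measurable
  have disj: "disjoint_family_on ?A {..J}"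
    using disjoint_family_first_exceedance by (rule disjoint_family_on_mono[rotated]) simp
  have intZ: "integrable M (\<lambda>\<omega>. (Z J \<omega>)\<^sup>2)"
    unfolding Z_def using sq by (intro integrable_square_sum) auto
  have intAZ: "integrable M (\<lambda>\<omega>. indicator (?A j) \<omega> * (Z J \<omega>)\<^sup>2)" for j
    using integrable_real_mult_indicator[OF sets_first_exceedance[where Z=Z and lam=lam and j=j, OF Z_meas] intZ]
    by (simp add: mult.commute)
  have "prob ?B = (\<Sum>j\<le>J. prob (?A j))"
    by (rule measure_finite_Union) (auto simp: disj)
  then have "lam\<^sup>2 * prob ?B = (\<Sum>j\<le>J. lam\<^sup>2 * prob (?A j))"
    by (simp add: sum_distrib_left)
  also have "\<dots> \<le> (\<Sum>j\<le>J. expectation (\<lambda>\<omega>. indicator (?A j) \<omega> * (Z J \<omega>)\<^sup>2))"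
    using first_exceedance_bound[OF ind _ sq mean lam] unfolding Z_def by (intro sum_mono) auto
  also have "\<dots> = expectation (\<lambda>\<omega>. \<Sum>j\<le>J. indicator (?A j) \<omega> * (Z J \<omega>)\<^sup>2)"
    using intAZ by (intro Bochner_Integration.integral_sum[symmetric])
  also have "\<dots> = expectation (\<lambda>\<omega>. indicator ?B \<omega> * (Z J \<omega>)\<^sup>2)"
    by (simp only: sum_distrib_right[symmetric] indicator_UN_disjoint[OF finite_atMost disj])
  also have "\<dots> \<le> expectation (\<lambda>\<omega>. (Z J \<omega>)\<^sup>2)"
    using intZ integrable_real_mult_indicator[OF _ intZ, of ?B]
    by (intro integral_mono) (auto simp: indicator_def mult.commute)
  also have "\<dots> = (\<Sum>i<J. expectation (\<lambda>\<omega>. (Y i \<omega>)\<^sup>2))"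
    unfolding Z_def using ind sq mean by (intro expectation_square_sum_indep) auto
  finally show ?thesis
    by (simp add: UN_first_exceedance Z_def)
qed

lemma real_choose_two: "real (m choose 2) = real m * (real m - 1) / 2"
proof -
  have "even (m * (m - 1))" by auto
  then have "real (m * (m - 1) div 2) = real (m * (m - 1)) / 2"
    by (simp add: real_of_nat_div)
  then show ?thesis by (cases m) (simp_all add: choose_two algebra_simps)
qed

lemma nat_ceiling_powr_three_quarters:
  fixes n :: nat
  assumes "1 \<le> n"
  defines "K \<equiv> nat \<lceil>real n powr (3/4)\<rceil>"
  shows "1 \<le> K" and "K \<le> n" and "(real n powr (9/8))\<^sup>2 \<le> real K ^ 3"
proof -
  have pos: "0 < real n powr (3/4)" using assms by simp
  then show "1 \<le> K" unfolding K_def by linarith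
  have "real n powr (3/4) \<le> real n powr 1" using assms by (intro powr_mono) auto
  then show "K \<le> n" unfolding K_def using assms by (simp add: ceiling_le_iff nat_le_iff)
  have "(real n powr (9/8))\<^sup>2 = (real n powr (3/4)) ^ 3"
    using assms by (simp add: powr_power)
  also have "\<dots> \<le> real K ^ 3"
    unfolding K_def using pos by (intro power_mono) linarith+
  finally show "(real n powr (9/8))\<^sup>2 \<le> real K ^ 3" .
qed

definition jump_count :: "(nat \<Rightarrow> real) \<Rightarrow> nat \<Rightarrow> real \<Rightarrow> nat" where
  "jump_count S N t = card {j. j < N \<and> (\<Sum>i\<le>j. S i) \<le> t}"

lemma jump_count_le: "jump_count S N t \<le> N"
proof -
  have "jump_count S N t \<le> card {..<N}"
    unfolding jump_count_def by (intro card_mono) auto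
  then show ?thesis by simp
qed

lemma jump_count_eq:
  fixes S :: "nat \<Rightarrow> real"
  assumes pos: "\<And>i. i < N \<Longrightarrow> 0 < S i" and m: "m \<le> N"
    and before: "(\<Sum>i<m. S i) \<le> t" and after: "m < N \<Longrightarrow> t < (\<Sum>i\<le>m. S i)"
  shows "jump_count S N t = m"
proof -
  have "{j. j < N \<and> (\<Sum>i\<le>j. S i) \<le> t} = {..<m}"
  proof (intro equalityI subsetI)
    fix j assume j: "j \<in> {j. j < N \<and> (\<Sum>i\<le>j. S i) \<le> t}"
    show "j \<in> {..<m}"
    proof (rule ccontr)
      assume "j \<notin> {..<m}"
      then have "(\<Sum>i\<le>m. S i) \<le> (\<Sum>i\<le>j. S i)"
        using pos j by (intro sum_mono2) (auto intro: less_imp_le)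
      then show False using j after \<open>j \<notin> {..<m}\<close> by auto
    qed
  next
    fix j assume "j \<in> {..<m}"
    moreover have "(\<Sum>i\<le>j. S i) \<le> (\<Sum>i<m. S i)" if "j < m"
      using pos m that by (intro sum_mono2) (auto intro: less_imp_le)
    ultimately show "j \<in> {j. j < N \<and> (\<Sum>i\<le>j. S i) \<le> t}"
      using m before by auto
  qed
  then show ?thesis by (simp add: jump_count_def)
qed

lemma jump_count_less:
  fixes S :: "nat \<Rightarrow> real"
  assumes nonneg: "\<And>i. i < N \<Longrightarrow> 0 \<le> S i" and m: "m \<le> N"
    and t: "0 \<le> t" "t < (\<Sum>i<m. S i)"
  shows "jump_count S N t < m"
proof -
  have "m \<noteq> 0"
  proof
    assume "m = 0"
    then show False using t by simp
  qed
  have "{j. j < N \<and> (\<Sum>i\<le>j. S i) \<le> t} \<subseteq> {..<m - 1}"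
  proof
    fix j assume j: "j \<in> {j. j < N \<and> (\<Sum>i\<le>j. S i) \<le> t}"
    show "j \<in> {..<m - 1}"
    proof (rule ccontr)
      assume "j \<notin> {..<m - 1}"
      then have "(\<Sum>i<m. S i) \<le> (\<Sum>i\<le>j. S i)"
        using nonneg j \<open>m \<noteq> 0\<close> by (intro sum_mono2) auto
      then show False using j t by simp
    qed
  qed
  then have "jump_count S N t \<le> m - 1"
    unfolding jump_count_def by (metis card_lessThan card_mono finite_lessThan)
  then show ?thesis using \<open>m \<noteq> 0\<close> by simp
qed

lemma sum_inverse_consecutive_products:
  "J < n \<Longrightarrow> (\<Sum>i<J. 1 / (real (n - i) * real (n - i - 1))) = 1 / real (n - J) - 1 / real n"
proof (induction J)
  case (Suc J)
  define y where "y = real (n - Suc J)"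
  have "0 < y" "real (n - J) = y + 1" "real (n - J - 1) = y"
    using Suc.prems unfolding y_def by auto
  then have "1 / (real (n - J) * real (n - J - 1)) = 1 / y - 1 / (y + 1)"
    by (simp add: field_simps)
  with Suc show ?case by (simp add: y_def \<open>real (n - J) = y + 1\<close>)
qed simp

lemma sum_inverse_consecutive_products_squared_le:
  assumes "J < n"
  shows "(\<Sum>i<J. 1 / (real (n - i) * real (n - i - 1))\<^sup>2) \<le> 1 / real (n - J) ^ 3"
proof -
  define K where "K = real (n - J)"
  have K: "1 \<le> K" unfolding K_def using assms by simp
  have term_le: "1 / (real (n - i) * real (n - i - 1))\<^sup>2 \<le> 1 / K\<^sup>2 * (1 / (real (n - i) * real (n - i - 1)))"
    if "i < J" for i
  proof -
    define p where "p = real (n - i) * real (n - i - 1)"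
    have "K * K \<le> p"
      unfolding p_def K_def using that assms by (intro mult_mono) auto
    moreover have "0 < K * K" using K by simp
    ultimately have "K\<^sup>2 \<le> p" "0 < p" by (auto simp: power2_eq_square)
    then show ?thesis
      unfolding p_def[symmetric] using K
      by (simp add: power2_eq_square divide_simps mult_right_mono)
  qed
  have "(\<Sum>i<J. 1 / (real (n - i) * real (n - i - 1))\<^sup>2)
      \<le> 1 / K\<^sup>2 * (\<Sum>i<J. 1 / (real (n - i) * real (n - i - 1)))"
    unfolding sum_distrib_left by (intro sum_mono term_le) simp
  also have "\<dots> = 1 / K\<^sup>2 * (1 / K - 1 / real n)"
    unfolding sum_inverse_consecutive_products[OF assms] K_def ..
  also have "\<dots> \<le> 1 / K ^ 3"
    using K by (simp add: power2_eq_square power3_eq_cube divide_simps)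
  finally show ?thesis unfolding K_def .
qed

definition finite_partition :: "nat set set \<Rightarrow> bool" where
  "finite_partition q \<longleftrightarrow> finite q \<and> {} \<notin> q \<and> disjoint q"

lemma finite_partition_merges:
  assumes q: "finite_partition q" and q': "q' \<in> merges q"
  shows "finite_partition q'" "card q' = card q - 1"
proof -
  from q' obtain A B where AB: "A \<in> q" "B \<in> q" "A \<noteq> B"
    and q'_eq: "q' = insert (A \<union> B) (q - {A, B})"
    unfolding merges_def by blast
  have fin: "finite q" and ne: "{} \<notin> q" and dj: "disjoint q"
    using q unfolding finite_partition_def by auto
  have "A \<noteq> {}" "B \<noteq> {}" "A \<inter> B = {}"
    using ne AB dj by (auto dest: disjointD)
  have new: "A \<union> B \<notin> q"
  proof
    assume "A \<union> B \<in> q"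
    moreover have "A \<union> B \<noteq> A" using \<open>B \<noteq> {}\<close> \<open>A \<inter> B = {}\<close> by blast
    ultimately have "(A \<union> B) \<inter> A = {}" using dj AB(1) by (auto dest: disjointD)
    then show False using \<open>A \<noteq> {}\<close> by blast
  qed
  have "card {A, B} \<le> card q" using AB fin by (intro card_mono) auto
  then have "2 \<le> card q" using AB(3) by simp
  then show "card q' = card q - 1"
    using new fin AB by (simp add: q'_eq card_Diff_subset)
  show "finite_partition q'"
    using fin ne dj AB \<open>A \<noteq> {}\<close> unfolding finite_partition_def disjoint_def q'_eq by auto
qed

lemma card_merges:
  assumes "finite_partition q"
  shows "card (merges q) = card q choose 2"
proof -
  have fin: "finite q" and ne: "{} \<notin> q" and dj: "disjoint q"
    using assms unfolding finite_partition_def by auto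
  define merge where "merge x = insert (\<Union>x) (q - x)" for x :: "nat set set"
  define pairs where "pairs = {x. x \<subseteq> q \<and> card x = 2}"
  have "merges q = merge ` pairs"
  proof (intro equalityI subsetI)
    fix r assume "r \<in> merges q"
    then obtain A B where "A \<in> q" "B \<in> q" "A \<noteq> B" "r = insert (A \<union> B) (q - {A, B})"
      unfolding merges_def by blast
    then show "r \<in> merge ` pairs"
      unfolding merge_def pairs_def by (intro image_eqI[of _ _ "{A, B}"]) auto
  next
    fix r assume "r \<in> merge ` pairs"
    then obtain A B where "A \<in> q" "B \<in> q" "A \<noteq> B" "r = merge {A, B}"
      unfolding pairs_def by (auto simp: card_2_iff)
    then show "r \<in> merges q" unfolding merges_def merge_def by auto
  qed
  moreover have "inj_on merge pairs"
  proof (rule inj_on_inverseI)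
    fix x assume "x \<in> pairs"
    then obtain A B where AB: "x = {A, B}" "A \<noteq> B" "A \<in> q" "B \<in> q"
      unfolding pairs_def by (auto simp: card_2_iff)
    then have "A \<noteq> {}" "B \<noteq> {}" "A \<inter> B = {}"
      using ne dj by (auto dest: disjointD)
    then have "A \<union> B \<noteq> A" "A \<union> B \<noteq> B" by blast+
    then show "q - merge x = x"
      using AB unfolding merge_def by auto
  qed
  ultimately have "card (merges q) = card pairs" by (simp add: card_image)
  also have "card pairs = card q choose 2" unfolding pairs_def by (rule n_subsets[OF fin])
  finally show ?thesis .
qed

lemma finite_merges: "finite q \<Longrightarrow> finite (merges q)"
proof -
  assume "finite q"
  have "merges q \<subseteq> (\<lambda>(A, B). insert (A \<union> B) (q - {A, B})) ` (q \<times> q)"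
    unfolding merges_def by auto
  moreover have "finite ((\<lambda>(A, B). insert (A \<union> B) (q - {A, B})) ` (q \<times> q))"
    using \<open>finite q\<close> by simp
  ultimately show ?thesis by (rule finite_subset)
qed

lemma finite_partition_singletons: "finite_partition (singletons n)"
  and card_singletons: "card (singletons n) = n"
  unfolding finite_partition_def disjoint_def singletons_def by (auto simp: card_image)

text \<open>Paths are padded with \<open>{}\<close> beyond step \<open>N\<close>, so that there are only finitely many.\<close>

definition merge_paths :: "nat set set \<Rightarrow> nat \<Rightarrow> (nat \<Rightarrow> nat set set) set" where
  "merge_paths q N = {p. p 0 = q \<and> (\<forall>m<N. p (Suc m) \<in> merges (p m)) \<and> (\<forall>m>N. p m = {})}"

definition path_prob :: "(nat \<Rightarrow> nat set set) \<Rightarrow> nat \<Rightarrow> real" where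
  "path_prob p N = (\<Prod>m<N. merge_prob (p m) (p (Suc m)))"

lemma merge_paths_0: "merge_paths q 0 = {\<lambda>m. if m = 0 then q else {}}"
  unfolding merge_paths_def by (auto simp: fun_eq_iff)

lemma inj_case_nat: "inj (case_nat q)"
proof (rule injI)
  fix f g :: "nat \<Rightarrow> 'a" assume "case_nat q f = case_nat q g"
  then have "case_nat q f (Suc m) = case_nat q g (Suc m)" for m by simp
  then show "f = g" by (simp add: fun_eq_iff)
qed

lemma merge_paths_Suc:
  "merge_paths q (Suc N) = (\<Union>q'\<in>merges q. case_nat q ` merge_paths q' N)"
proof (intro equalityI subsetI)
  fix p assume p: "p \<in> merge_paths q (Suc N)"
  then have "p = case_nat q (\<lambda>m. p (Suc m))"
    by (auto simp: fun_eq_iff merge_paths_def split: nat.split)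
  moreover have "(\<lambda>m. p (Suc m)) \<in> merge_paths (p 1) N" "p 1 \<in> merges q"
    using p unfolding merge_paths_def by auto
  ultimately show "p \<in> (\<Union>q'\<in>merges q. case_nat q ` merge_paths q' N)" by blast
next
  fix p assume "p \<in> (\<Union>q'\<in>merges q. case_nat q ` merge_paths q' N)"
  then obtain q' p' where "q' \<in> merges q" "p' \<in> merge_paths q' N" "p = case_nat q p'"
    by blast
  then show "p \<in> merge_paths q (Suc N)"
    unfolding merge_paths_def by (auto simp: less_Suc_eq_0_disj gr0_conv_Suc split: nat.split)
qed

lemma finite_merge_paths: "finite_partition q \<Longrightarrow> finite (merge_paths q N)"
proof (induction N arbitrary: q)
  case 0
  then show ?case by (simp add: merge_paths_0)
next
  case (Suc N)
  have "finite (merges q)"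
    using Suc.prems by (simp add: finite_merges finite_partition_def)
  moreover have "finite (merge_paths q' N)" if "q' \<in> merges q" for q'
    using Suc.IH finite_partition_merges(1)[OF Suc.prems that] by blast
  ultimately show ?case unfolding merge_paths_Suc by blast
qed

lemma card_merge_path:
  assumes "finite_partition q" "p \<in> merge_paths q N" "m \<le> N"
  shows "finite_partition (p m)" "card (p m) = card q - m"
proof -
  have "finite_partition (p m) \<and> card (p m) = card q - m"
    using assms(3)
  proof (induction m)
    case 0
    then show ?case using assms by (simp add: merge_paths_def)
  next
    case (Suc m)
    then have "p (Suc m) \<in> merges (p m)" using assms(2) by (simp add: merge_paths_def)
    then show ?case using Suc finite_partition_merges by fastforce
  qed
  then show "finite_partition (p m)" "card (p m) = card q - m" by auto
qed

lemma path_prob_case_nat: "path_prob (case_nat q p) (Suc N) = merge_prob q (p 0) * path_prob p N"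
  unfolding path_prob_def by (simp add: prod.lessThan_Suc_shift del: prod.lessThan_Suc)

lemma sum_path_prob:
  assumes "finite_partition q" "N < card q"
  shows "(\<Sum>p\<in>merge_paths q N. path_prob p N) = 1"
  using assms
proof (induction N arbitrary: q)
  case 0
  then show ?case by (simp add: merge_paths_0 path_prob_def)
next
  case (Suc N)
  let ?c = "1 / real (card q choose 2)"
  have next_partition: "finite_partition q'" "card q' = card q - 1" if "q' \<in> merges q" for q'
    using finite_partition_merges Suc.prems that by blast+
  have disjoint: "disjoint_family_on (\<lambda>q'. case_nat q ` merge_paths q' N) (merges q)"
    by (auto simp: disjoint_family_on_def merge_paths_def dest!: injD[OF inj_case_nat])
  have step: "(\<Sum>p\<in>case_nat q ` merge_paths q' N. path_prob p (Suc N)) = ?c"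
    if q': "q' \<in> merges q" for q'
  proof -
    have "(\<Sum>p\<in>case_nat q ` merge_paths q' N. path_prob p (Suc N))
        = (\<Sum>p\<in>merge_paths q' N. ?c * path_prob p N)"
      using q' by (subst sum.reindex[OF inj_on_subset[OF inj_case_nat]])
        (auto intro!: sum.cong simp: path_prob_case_nat merge_prob_def merge_paths_def)
    also have "\<dots> = ?c"
      using Suc.IH[of q'] next_partition[OF q'] Suc.prems
      by (simp add: sum_divide_distrib[symmetric])
    finally show ?thesis .
  qed
  have "(\<Sum>p\<in>merge_paths q (Suc N). path_prob p (Suc N))
      = (\<Sum>q'\<in>merges q. \<Sum>p\<in>case_nat q ` merge_paths q' N. path_prob p (Suc N))"
    unfolding merge_paths_Suc using Suc.prems next_partition(1) disjoint
    by (intro sum.UNION_disjoint_family ballI finite_merges finite_imageI finite_merge_paths)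
       (auto simp: finite_partition_def)
  also have "\<dots> = (\<Sum>q'\<in>merges q. ?c)"
    by (rule sum.cong[OF refl step])
  also have "\<dots> = 1" using card_merges[OF Suc.prems(1)] Suc.prems by simp
  finally show ?case .
qed

section \<open>Kingman's coalescent\<close>

locale kingman_coalescent =
  fixes M :: "'a measure" and n :: nat
    and X :: "nat \<Rightarrow> 'a \<Rightarrow> nat set set" and S :: "nat \<Rightarrow> 'a \<Rightarrow> real"
  assumes jump_hold: "kingman_jump_hold M n X S" and n_pos: "1 \<le> n"
begin

sublocale prob_space M
  using jump_hold unfolding kingman_jump_hold_def by blast

lemma measurable_X[measurable]: "X m \<in> M \<rightarrow>\<^sub>M count_space UNIV"
  and measurable_S[measurable]: "S m \<in> borel_measurable M"
  and X_0: "\<omega> \<in> space M \<Longrightarrow> X 0 \<omega> = singletons n"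
  using jump_hold unfolding kingman_jump_hold_def by blast+

definition rate :: "nat \<Rightarrow> real" where
  "rate m = real ((n - m) choose 2)"

definition path_event :: "(nat \<Rightarrow> real) \<Rightarrow> (nat \<Rightarrow> nat set set) \<Rightarrow> 'a set" where
  "path_event s p = {\<omega> \<in> space M. \<forall>m<n-1. X (Suc m) \<omega> = p (Suc m) \<and> S m \<omega> > s m}"

abbreviation jump_paths :: "(nat \<Rightarrow> nat set set) set" where
  "jump_paths \<equiv> merge_paths (singletons n) (n - 1)"

lemma rate_pos: "m < n - 1 \<Longrightarrow> 0 < rate m"
  unfolding rate_def by simp

lemma sets_path_event[measurable]: "path_event s p \<in> sets M"
  unfolding path_event_def by measurable

lemma card_jump_path: "p \<in> jump_paths \<Longrightarrow> m \<le> n - 1 \<Longrightarrow> card (p m) = n - m"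
  using card_merge_path(2)[OF finite_partition_singletons] card_singletons by metis

lemma disjoint_family_path_event: "disjoint_family_on (path_event s) jump_paths"
  unfolding disjoint_family_on_def
proof (intro ballI impI)
  fix p p' assume p: "p \<in> jump_paths" and p': "p' \<in> jump_paths" and "p \<noteq> p'"
  then obtain k where k: "p k \<noteq> p' k" by (auto simp: fun_eq_iff)
  moreover have "k \<noteq> 0" "\<not> n - 1 < k" using p p' k by (auto simp: merge_paths_def)
  ultimately obtain m where "k = Suc m" "m < n - 1" by (cases k) auto
  with k show "path_event s p \<inter> path_event s p' = {}"
    unfolding path_event_def by auto
qed

lemma measure_path_event:
  assumes "p \<in> jump_paths"
  shows "prob (path_event s p) = path_prob p (n - 1) * (\<Prod>m<n-1. exp (- rate m * max 0 (s m)))"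
proof -
  have "p 0 = singletons n" using assms by (simp add: merge_paths_def)
  then have "prob (path_event s p)
      = (\<Prod>m<n-1. merge_prob (p m) (p (Suc m)) * exp (- real (card (p m) choose 2) * max 0 (s m)))"
    using jump_hold unfolding kingman_jump_hold_def path_event_def by blast
  also have "\<dots> = (\<Prod>m<n-1. merge_prob (p m) (p (Suc m)) * exp (- rate m * max 0 (s m)))"
    using assms by (intro prod.cong refl) (simp add: card_jump_path rate_def)
  finally show ?thesis by (simp add: path_prob_def prod.distrib)
qed

lemma measure_UN_path_event:
  "prob (\<Union>p\<in>jump_paths. path_event s p) = (\<Prod>m<n-1. exp (- rate m * max 0 (s m)))"
proof -
  have "prob (\<Union>p\<in>jump_paths. path_event s p) = (\<Sum>p\<in>jump_paths. prob (path_event s p))"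
    by (intro measure_finite_Union finite_merge_paths finite_partition_singletons disjoint_family_path_event) auto
  also have "\<dots> = (\<Sum>p\<in>jump_paths. path_prob p (n - 1)) * (\<Prod>m<n-1. exp (- rate m * max 0 (s m)))"
    by (simp add: measure_path_event sum_distrib_right)
  also have "(\<Sum>p\<in>jump_paths. path_prob p (n - 1)) = 1"
    using n_pos by (intro sum_path_prob finite_partition_singletons) (simp add: card_singletons)
  finally show ?thesis by simp
qed

lemma AE_path_event: "AE \<omega> in M. \<exists>p\<in>jump_paths. \<omega> \<in> path_event (\<lambda>_. 0) p"
proof -
  have "prob (\<Union>p\<in>jump_paths. path_event (\<lambda>_. 0) p) = 1"
    using measure_UN_path_event[of "\<lambda>_. 0"] by simp
  then have "AE \<omega> in M. \<omega> \<in> (\<Union>p\<in>jump_paths. path_event (\<lambda>_. 0) p)"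
    by (intro AE_prob_1) simp
  then show ?thesis by simp
qed

lemma AE_regular: "AE \<omega> in M. (\<forall>m<n-1. 0 < S m \<omega>) \<and> (\<forall>m\<le>n-1. card (X m \<omega>) = n - m)"
  using AE_path_event
proof (rule eventually_mono)
  fix \<omega> assume "\<exists>p\<in>jump_paths. \<omega> \<in> path_event (\<lambda>_. 0) p"
  then obtain p where p: "p \<in> jump_paths" and \<omega>: "\<omega> \<in> path_event (\<lambda>_. 0) p" by blast
  have "card (X m \<omega>) = n - m" if "m \<le> n - 1" for m
  proof (cases m)
    case 0
    then show ?thesis using \<omega> X_0 card_singletons by (simp add: path_event_def)
  next
    case (Suc k)
    then show ?thesis using \<omega> that card_jump_path[OF p that] by (simp add: path_event_def)
  qed
  then show "(\<forall>m<n-1. 0 < S m \<omega>) \<and> (\<forall>m\<le>n-1. card (X m \<omega>) = n - m)"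
    using \<omega> by (simp add: path_event_def)
qed

lemma holding_survival:
  "prob {\<omega>\<in>space M. \<forall>m<n-1. s m < S m \<omega>} = (\<Prod>m<n-1. exp (- rate m * max 0 (s m)))"
proof -
  let ?A = "{\<omega>\<in>space M. \<forall>m<n-1. s m < S m \<omega>}"
  let ?B = "\<Union>p\<in>jump_paths. path_event (\<lambda>m. max 0 (s m)) p"
  have "AE \<omega> in M. \<omega> \<in> ?A \<longleftrightarrow> \<omega> \<in> ?B"
    using AE_path_event
  proof (rule eventually_mono)
    fix \<omega> assume "\<exists>p\<in>jump_paths. \<omega> \<in> path_event (\<lambda>_. 0) p"
    then obtain p where p: "p \<in> jump_paths" and \<omega>: "\<omega> \<in> path_event (\<lambda>_. 0) p" by blast
    then have "\<omega> \<in> ?B \<longleftrightarrow> \<omega> \<in> path_event (\<lambda>m. max 0 (s m)) p"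
      using disjoint_family_path_event[of "\<lambda>_. 0"]
      by (auto simp: path_event_def disjoint_family_on_def)
    then show "\<omega> \<in> ?A \<longleftrightarrow> \<omega> \<in> ?B"
      using \<omega> by (auto simp: path_event_def)
  qed
  moreover have "?B \<in> sets M"
    using finite_merge_paths[OF finite_partition_singletons] by (intro sets.finite_UN) auto
  ultimately have "prob ?A = prob ?B"
    by (intro measure_eq_AE) auto
  also have "prob ?B = (\<Prod>m<n-1. exp (- rate m * max 0 (max 0 (s m))))"
    by (rule measure_UN_path_event)
  finally show ?thesis by simp
qed

lemma holding_survival_single:
  assumes i: "i < n - 1"
  shows "prob {\<omega>\<in>space M. a < S i \<omega>} = exp (- rate i * max 0 a)"
proof -
  define s where "s m = (if m = i then a else -1)" for m
  have "AE \<omega> in M. \<omega> \<in> {\<omega>\<in>space M. a < S i \<omega>} \<longleftrightarrow> \<omega> \<in> {\<omega>\<in>space M. \<forall>m<n-1. s m < S m \<omega>}"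
    using AE_regular by (rule eventually_mono) (use i in \<open>force simp: s_def\<close>)
  then have "prob {\<omega>\<in>space M. a < S i \<omega>} = prob {\<omega>\<in>space M. \<forall>m<n-1. s m < S m \<omega>}"
    by (intro measure_eq_AE) auto
  also have "\<dots> = (\<Prod>m<n-1. if m = i then exp (- rate i * max 0 a) else 1)"
    unfolding holding_survival by (intro prod.cong refl) (simp add: s_def)
  also have "\<dots> = exp (- rate i * max 0 a)"
    using i by simp
  finally show ?thesis .
qed

lemma holding_exponential:
  assumes i: "i < n - 1"
  shows "distributed M lborel (S i) (exponential_density (rate i))"
proof -
  have "prob {\<omega>\<in>space M. S i \<omega> \<le> a} = 1 - exp (- a * rate i)" if "0 \<le> a" for a
  proof -
    have "{\<omega>\<in>space M. S i \<omega> \<le> a} = space M - {\<omega>\<in>space M. a < S i \<omega>}" by auto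
    then show ?thesis
      using holding_survival_single[OF i, of a] that by (simp add: prob_compl mult.commute)
  qed
  then show ?thesis
    by (simp add: exponential_distributed_iff[OF rate_pos[OF i]])
qed

lemma holding_indep: "indep_vars (\<lambda>_. borel) S {..<n-1}"
proof (rule indep_vars_survivalI)
  show "prob {\<omega>\<in>space M. \<forall>i\<in>{..<n-1}. s i < S i \<omega>} = (\<Prod>i\<in>{..<n-1}. prob {\<omega>\<in>space M. s i < S i \<omega>})"
    for s
    using holding_survival[of s] holding_survival_single by (simp add: Ball_def)
qed simp_all

lemma card_kingman_proc:
  assumes "\<forall>m\<le>n-1. card (X m \<omega>) = n - m"
  shows "card (kingman_proc n X S t \<omega>) = n - jump_count (\<lambda>i. S i \<omega>) (n - 1) t"
proof -
  have "kingman_proc n X S t \<omega> = X (jump_count (\<lambda>i. S i \<omega>) (n - 1) t) \<omega>"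
    by (simp add: kingman_proc_def jump_count_def)
  then show ?thesis using assms jump_count_le by simp
qed

lemma hit_time_eq_sum:
  assumes pos: "\<forall>m<n-1. 0 < S m \<omega>" and card: "\<forall>m\<le>n-1. card (X m \<omega>) = n - m"
    and k: "1 \<le> k" "k \<le> n"
  shows "hit_time n X S k \<omega> = (\<Sum>i<n-k. S i \<omega>)"
proof -
  let ?T = "{t. 0 \<le> t \<and> card (kingman_proc n X S t \<omega>) = k}"
  define a where "a = (\<Sum>i<n-k. S i \<omega>)"
  have hit_iff: "card (kingman_proc n X S t \<omega>) = k \<longleftrightarrow> jump_count (\<lambda>i. S i \<omega>) (n - 1) t = n - k" for t
    using card_kingman_proc[OF card, of t] jump_count_le[of "\<lambda>i. S i \<omega>" "n - 1" t] k by auto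
  have "0 \<le> a" unfolding a_def using pos k by (intro sum_nonneg) (auto intro: less_imp_le)
  moreover have "jump_count (\<lambda>i. S i \<omega>) (n - 1) a = n - k"
  proof (rule jump_count_eq)
    assume "n - k < n - 1"
    then show "a < (\<Sum>i\<le>n-k. S i \<omega>)"
      unfolding a_def using pos by (simp add: lessThan_Suc_atMost[symmetric])
  qed (use pos k a_def in auto)
  ultimately have "a \<in> ?T" using hit_iff by simp
  moreover have "a \<le> t" if "t \<in> ?T" for t
  proof (rule ccontr)
    assume "\<not> a \<le> t"
    then have "jump_count (\<lambda>i. S i \<omega>) (n - 1) t < n - k"
      using that pos k unfolding a_def by (intro jump_count_less) (auto intro: less_imp_le)
    then show False using that hit_iff by simp
  qed
  ultimately show ?thesis
    unfolding hit_time_def a_def[symmetric] by (intro cInf_eq_minimum)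
qed

lemma inverse_rate: "m < n - 1 \<Longrightarrow> 1 / rate m = 2 / (real (n - m) * real (n - m - 1))"
  unfolding rate_def real_choose_two by (simp add: of_nat_diff)

lemma sum_inverse_rate:
  assumes "1 \<le> k" "k \<le> n"
  shows "(\<Sum>i<n-k. 1 / rate i) = 2 / real k - 2 / real n"
proof -
  have "(\<Sum>i<n-k. 1 / rate i) = 2 * (\<Sum>i<n-k. 1 / (real (n - i) * real (n - i - 1)))"
    using assms by (simp add: inverse_rate sum_distrib_left)
  also have "\<dots> = 2 / real k - 2 / real n"
    using assms by (subst sum_inverse_consecutive_products) auto
  finally show ?thesis .
qed

lemma prob_holding_deviation:
  assumes K: "1 \<le> K" "K \<le> n" and lam: "0 \<le> lam"
  shows "lam\<^sup>2 * prob {\<omega>\<in>space M. \<exists>j\<le>n-K. lam \<le> \<bar>\<Sum>i<j. S i \<omega> - 1 / rate i\<bar>} \<le> 4 / real K ^ 3"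
proof -
  define Y where "Y i \<omega> = S i \<omega> - 1 / rate i" for i \<omega>
  have [measurable]: "Y i \<in> borel_measurable M" for i unfolding Y_def by measurable
  have J: "i < n - 1" if "i < n - K" for i using that K by linarith
  have "indep_vars (\<lambda>_. borel) (\<lambda>i \<omega>. S i \<omega> - 1 / rate i) {..<n-K}"
    by (intro indep_vars_compose2[OF indep_vars_subset[OF holding_indep]]) (use K in auto)
  then have ind: "indep_vars (\<lambda>_. borel) Y {..<n-K}" by (simp add: Y_def[abs_def])
  note moments = exponential_distributed_centered_moments[OF rate_pos holding_exponential, OF J J]
  have "lam\<^sup>2 * prob {\<omega>\<in>space M. \<exists>j\<le>n-K. lam \<le> \<bar>\<Sum>i<j. Y i \<omega>\<bar>}
      \<le> (\<Sum>i<n-K. expectation (\<lambda>\<omega>. (Y i \<omega>)\<^sup>2))"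
    using moments by (intro kolmogorov_inequality ind lam) (simp_all add: Y_def[abs_def])
  also have "\<dots> = (\<Sum>i<n-K. 4 / (real (n - i) * real (n - i - 1))\<^sup>2)"
  proof (intro sum.cong refl)
    fix i assume i: "i \<in> {..<n-K}"
    then have "i < n - 1" using J by blast
    have "expectation (\<lambda>\<omega>. (Y i \<omega>)\<^sup>2) = (1 / rate i)\<^sup>2"
      using moments(3)[of i] i by (simp add: Y_def power_one_over)
    also have "\<dots> = 4 / (real (n - i) * real (n - i - 1))\<^sup>2"
      using \<open>i < n - 1\<close> by (simp add: inverse_rate power_divide)
    finally show "expectation (\<lambda>\<omega>. (Y i \<omega>)\<^sup>2) = 4 / (real (n - i) * real (n - i - 1))\<^sup>2" .
  qed
  also have "\<dots> = 4 * (\<Sum>i<n-K. 1 / (real (n - i) * real (n - i - 1))\<^sup>2)"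
    by (simp add: sum_distrib_left)
  also have "\<dots> \<le> 4 / real K ^ 3"
    using sum_inverse_consecutive_products_squared_le[of "n - K" n] K by simp
  finally show ?thesis by (simp add: Y_def)
qed

lemma hit_time_deviation:
  assumes K: "1 \<le> K" "K \<le> n" and lam: "0 < lam"
  shows "\<exists>A\<in>sets M. 1 - 4 / (lam\<^sup>2 * real K ^ 3) \<le> prob A \<and>
    (\<forall>\<omega>\<in>A. \<forall>k. K \<le> k \<and> k \<le> n \<longrightarrow> \<bar>hit_time n X S k \<omega> - (2 / real k - 2 / real n)\<bar> < lam)"
proof -
  define Bad where "Bad = {\<omega>\<in>space M. \<exists>j\<le>n-K. lam \<le> \<bar>\<Sum>i<j. S i \<omega> - 1 / rate i\<bar>}"
  have Bad_sets: "Bad \<in> sets M" unfolding Bad_def by measurable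
  obtain N where regular: "\<And>\<omega>. \<omega> \<in> space M - N \<Longrightarrow>
      (\<forall>m<n-1. 0 < S m \<omega>) \<and> (\<forall>m\<le>n-1. card (X m \<omega>) = n - m)"
    and N: "N \<in> null_sets M"
    using AE_E3[OF AE_regular] by blast
  define A where "A = space M - Bad - N"
  have "A \<in> sets M" unfolding A_def using Bad_sets N by auto
  moreover have "1 - 4 / (lam\<^sup>2 * real K ^ 3) \<le> prob A"
  proof -
    have "prob A = 1 - prob Bad"
      unfolding A_def using Bad_sets N by (simp add: measure_Diff_null_set prob_compl)
    moreover have "lam\<^sup>2 * prob Bad \<le> 4 / real K ^ 3"
      unfolding Bad_def using prob_holding_deviation[OF K] lam by simp
    then have "prob Bad \<le> 4 / (lam\<^sup>2 * real K ^ 3)"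
      using lam K by (simp add: pos_le_divide_eq ac_simps)
    ultimately show ?thesis by linarith
  qed
  moreover have "\<bar>hit_time n X S k \<omega> - (2 / real k - 2 / real n)\<bar> < lam"
    if \<omega>: "\<omega> \<in> A" and k: "K \<le> k" "k \<le> n" for \<omega> k
  proof -
    have "hit_time n X S k \<omega> = (\<Sum>i<n-k. S i \<omega>)"
      using regular[of \<omega>] \<omega> k K by (intro hit_time_eq_sum) (auto simp: A_def)
    also have "\<dots> = (\<Sum>i<n-k. S i \<omega> - 1 / rate i) + (2 / real k - 2 / real n)"
      using k K by (simp add: sum_subtractf sum_inverse_rate)
    moreover have "\<forall>j\<le>n-K. \<not> lam \<le> \<bar>\<Sum>i<j. S i \<omega> - 1 / rate i\<bar>"
      using \<omega> unfolding A_def Bad_def by auto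
    then have "\<bar>\<Sum>i<n-k. S i \<omega> - 1 / rate i\<bar> < lam"
      using k by (simp add: not_le)
    ultimately show ?thesis by simp
  qed
  ultimately show ?thesis by blast
qed

end

theorem lemma17:
  fixes \<epsilon> :: real
  assumes "\<epsilon> > 0"
  shows "\<exists>C>0. \<forall>n::nat. n \<ge> 1 \<longrightarrow>
           (\<forall>(M::'a measure) X S. kingman_jump_hold M n X S \<longrightarrow>
              (\<exists>A \<in> sets M. measure M A \<ge> 1 - \<epsilon> \<and>
                 (\<forall>\<omega>\<in>A. \<forall>k::nat. real n powr (3/4) \<le> real k \<and> k \<le> n \<longrightarrow>
                    \<bar>hit_time n X S k \<omega> - (2 / real k - 2 / real n)\<bar>
                      \<le> C / real n powr (9/8))))"
proof (intro exI[of _ "2 / sqrt \<epsilon>"] conjI allI impI)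
  fix n :: nat and M :: "'a measure" and X S
  assume n: "n \<ge> 1" and "kingman_jump_hold M n X S"
  then interpret kingman_coalescent M n X S by unfold_locales
  define K where "K = nat \<lceil>real n powr (3/4)\<rceil>"
  define lam where "lam = 2 / sqrt \<epsilon> / real n powr (9/8)"
  have K: "1 \<le> K" "K \<le> n" "(real n powr (9/8))\<^sup>2 \<le> real K ^ 3"
    using nat_ceiling_powr_three_quarters[OF n] unfolding K_def by auto
  have "0 < lam" using assms n by (simp add: lam_def)
  then obtain A where "A \<in> sets M" and A: "1 - 4 / (lam\<^sup>2 * real K ^ 3) \<le> prob A"
    and close: "\<forall>\<omega>\<in>A. \<forall>k. K \<le> k \<and> k \<le> n \<longrightarrow> \<bar>hit_time n X S k \<omega> - (2 / real k - 2 / real n)\<bar> < lam"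
    using hit_time_deviation[OF K(1,2)] by blast
  have "4 / (lam\<^sup>2 * real K ^ 3) \<le> 4 / (lam\<^sup>2 * (real n powr (9/8))\<^sup>2)"
    using K \<open>0 < lam\<close> n by (intro divide_left_mono mult_left_mono) simp_all
  also have "\<dots> = \<epsilon>" using assms n by (simp add: lam_def power_divide power_mult_distrib)
  finally have "1 - \<epsilon> \<le> prob A" using A by linarith
  moreover have "\<bar>hit_time n X S k \<omega> - (2 / real k - 2 / real n)\<bar> \<le> 2 / sqrt \<epsilon> / real n powr (9/8)"
    if "\<omega> \<in> A" "real n powr (3/4) \<le> real k" "k \<le> n" for \<omega> k
  proof -
    have "K \<le> k" using that(2) unfolding K_def by (simp add: ceiling_le_iff nat_le_iff)
    then show ?thesis using close that unfolding lam_def by (simp add: less_imp_le)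
  qed
  ultimately show "\<exists>A\<in>sets M. 1 - \<epsilon> \<le> prob A \<and> (\<forall>\<omega>\<in>A. \<forall>k. real n powr (3/4) \<le> real k \<and> k \<le> n \<longrightarrow>
      \<bar>hit_time n X S k \<omega> - (2 / real k - 2 / real n)\<bar> \<le> 2 / sqrt \<epsilon> / real n powr (9/8))"
    using \<open>A \<in> sets M\<close> by blast
qed (use assms in simp)

end
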